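(* Let $u$ be a symmetric decreasing function on $\mathbb{T}$, and let $h,\bar h$ be pdfs such that $\bar h$ is more focused than $h$. Then for all $r\in\mathbb{T}$, $$\int h(x-r)u(x)\,dx\le\int\bar h(x)u(x)\,dx.$$
   Context: $\mathbb{T}=\mathbb{R}/\mathbb{Z}$, identified with $[-\tfrac12,\tfrac12)$; integrals are over $\mathbb{T}$. A pdf is a nonnegative function in $L^2(\mathbb{T})$ with integral 1. A function $u$ is symmetric decreasing if $u(x)=u(-x)$ and $u(x)\ge u(y)$ for all $0\le x\le y$ (here $y\le\tfrac12$). A function $\bar h$ is more focused than $h$ if for all $z\in[0,\tfrac12]$ and all $r\in\mathbb{T}$, $\int_{r-z}^{r+z}h\le\int_{-z}^{z}\bar h$. *)

theory Defs
  imports "HOL-Analysis.Analysis"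
begin

text \<open>Functions on the circle T = R/Z are represented as 1-periodic functions
  real => real; integrals over T are integrals over the fundamental domain [-1/2,1/2].\<close>

definition periodic1 :: "(real \<Rightarrow> real) \<Rightarrow> bool" where
  "periodic1 f \<longleftrightarrow> (\<forall>x. f (x + 1) = f x)"

definition is_pdf :: "(real \<Rightarrow> real) \<Rightarrow> bool" where
  "is_pdf h \<longleftrightarrow> periodic1 h \<and> (\<forall>x. 0 \<le> h x)
     \<and> h absolutely_integrable_on {-1/2..1/2}
     \<and> (\<lambda>x. (h x)\<^sup>2) absolutely_integrable_on {-1/2..1/2}
     \<and> integral {-1/2..1/2} h = 1"

definition symmetric_decreasing :: "(real \<Rightarrow> real) \<Rightarrow> bool" where
  "symmetric_decreasing u \<longleftrightarrow> periodic1 u \<and> (\<forall>x. u x = u (- x))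
     \<and> (\<forall>x y. 0 \<le> x \<and> x \<le> y \<and> y \<le> 1/2 \<longrightarrow> u y \<le> u x)"

definition more_focused :: "(real \<Rightarrow> real) \<Rightarrow> (real \<Rightarrow> real) \<Rightarrow> bool" where
  "more_focused hbar h \<longleftrightarrow>
     (\<forall>z r. 0 \<le> z \<and> z \<le> 1/2 \<longrightarrow> integral {r-z..r+z} h \<le> integral {-z..z} hbar)"

end

theory Submission
  imports Defs
begin

text \<open>Put \<open>f = hbar - h(\<cdot> - r)\<close>. By periodicity the shifted density still has mass 1 on the
  fundamental domain, so \<open>f\<close> has total integral 0, and being more focused says exactly that
  \<open>f\<close> has nonnegative integral over every centred interval \<open>[-c, c]\<close>. Folding with the evenness
  of \<open>u\<close> turns the integral of \<open>f u\<close> into that of \<open>\<phi> u\<close> over \<open>[0, 1/2]\<close>, where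
  \<open>\<phi> x = f x + f (-x)\<close> has nonnegative partial integrals \<open>\<Phi> c\<close> over \<open>[0, c]\<close> with \<open>\<Phi> (1/2) = 0\<close>.
  Bonnet's second mean value theorem for the decreasing weight \<open>u\<close> then shows that this integral
  equals \<open>(u 0 - u (1/2)) \<Phi> c \<ge> 0\<close> for some \<open>c\<close>.\<close>

lemma periodic1_shift_int:
  assumes "periodic1 h"
  shows "h (x + of_int k) = h x"
proof -
  have nat: "h (y + real n) = h y" for y n
  proof (induction n)
    case (Suc n)
    have "h (y + real (Suc n)) = h (y + real n + 1)" by (simp add: algebra_simps)
    with Suc assms show ?case by (simp add: periodic1_def)
  qed simp
  show ?thesis
  proof (cases "k \<ge> 0")
    case True
    then obtain n where "k = int n" by (metis nonneg_int_cases)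
    then show ?thesis using nat by simp
  next
    case False
    then obtain n where "k = - int n" by (metis nonpos_int_cases linorder_linear)
    then show ?thesis using nat[of "x - real n" n] by simp
  qed
qed

lemma periodic1_has_integral_shift:
  fixes h :: "real \<Rightarrow> real"
  assumes per: "periodic1 h" and h: "(h has_integral I) {a..a+1}"
  shows "((\<lambda>x. h (x - r)) has_integral I) {a..a+1}"
proof -
  define s where "s = r - of_int \<lfloor>r\<rfloor>"
  have s: "0 \<le> s" "s < 1" unfolding s_def by linarith+
  have h_shift: "h (x - r) = h (x - s)" for x
    using periodic1_shift_int[OF per, of "x - r" "\<lfloor>r\<rfloor>"] by (simp add: s_def algebra_simps)
  have h_int: "h integrable_on {a..a+1}" using h by blast
  have left: "(h has_integral integral {a..a+1-s} h) {a..a+1-s}"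
    using integrable_subinterval_real[OF h_int, of a "a+1-s"] s by auto
  have "(h has_integral integral {a+1-s..a+1} h) {a+1-s..a+1}"
    using integrable_subinterval_real[OF h_int, of "a+1-s" "a+1"] s by auto
  then have "((\<lambda>x. h (x + 1)) has_integral integral {a+1-s..a+1} h) {a-s..a}"
    using has_integral_shift_real_ivl[of h _ "a+1-s" "a+1" 1] by simp
  then have right: "(h has_integral integral {a+1-s..a+1} h) {a-s..a}"
    using per by (simp add: periodic1_def)
  have "integral {a..a+1-s} h + integral {a+1-s..a+1} h = I"
    using Henstock_Kurzweil_Integration.integral_combine[OF _ _ h_int, of "a+1-s"] s integral_unique[OF h] by simp
  then have "(h has_integral I) {a-s..a+1-s}"
    using has_integral_combine[OF _ _ right left] s by (simp add: add.commute)
  then show ?thesis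
    using has_integral_shift_real_ivl[of h I "a-s" "a+1-s" "-s"] by (simp add: h_shift)
qed

lemma integrable_mult_mono:
  fixes f u :: "real \<Rightarrow> real"
  assumes "f integrable_on {a..b}" and "a \<le> b"
    and "\<And>x y. a \<le> x \<Longrightarrow> x \<le> y \<Longrightarrow> y \<le> b \<Longrightarrow> u x \<le> u y"
  shows "(\<lambda>x. f x * u x) integrable_on {a..b}"
proof -
  obtain c where "((\<lambda>x. u x * f x) has_integral
      (u a * integral {a..c} f + u b * integral {c..b} f)) {a..b}"
    using second_mean_value_theorem_full[where g=u, OF assms] by blast
  then show ?thesis by (auto simp: mult.commute intro: has_integral_integrable)
qed

lemma integrable_mult_antimono:
  fixes f u :: "real \<Rightarrow> real"
  assumes "f integrable_on {a..b}" and "a \<le> b"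
    and "\<And>x y. a \<le> x \<Longrightarrow> x \<le> y \<Longrightarrow> y \<le> b \<Longrightarrow> u y \<le> u x"
  shows "(\<lambda>x. f x * u x) integrable_on {a..b}"
proof -
  have "(\<lambda>x. f x * - u x) integrable_on {a..b}"
    by (rule integrable_mult_mono) (use assms in auto)
  then show ?thesis using integrable_neg by fastforce
qed

lemma symmetric_decreasing_even: "symmetric_decreasing u \<Longrightarrow> u (- x) = u x"
  unfolding symmetric_decreasing_def by metis

lemma symmetric_decreasing_antimono:
  "symmetric_decreasing u \<Longrightarrow> 0 \<le> x \<Longrightarrow> x \<le> y \<Longrightarrow> y \<le> 1/2 \<Longrightarrow> u y \<le> u x"
  unfolding symmetric_decreasing_def by blast

lemma integrable_mult_symmetric_decreasing:
  fixes f u :: "real \<Rightarrow> real"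
  assumes f: "f integrable_on {-1/2..1/2}" and u: "symmetric_decreasing u"
  shows "(\<lambda>x. f x * u x) integrable_on {-1/2..1/2}"
proof (rule Henstock_Kurzweil_Integration.integrable_combine[of "-1/2" 0])
  show "(\<lambda>x. f x * u x) integrable_on {0..1/2}"
    using integrable_subinterval_real[OF f, of 0 "1/2"]
    by (intro integrable_mult_antimono) (auto intro: symmetric_decreasing_antimono[OF u])
  have "u x \<le> u y" if "-1/2 \<le> x" "x \<le> y" "y \<le> 0" for x y
    using symmetric_decreasing_antimono[OF u, of "- y" "- x"] that
    by (simp add: symmetric_decreasing_even[OF u])
  then show "(\<lambda>x. f x * u x) integrable_on {-1/2..0}"
    using integrable_subinterval_real[OF f, of "-1/2" 0]
    by (intro integrable_mult_mono) auto
qed auto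

lemma has_integral_fold_symmetric:
  fixes f :: "real \<Rightarrow> 'a::banach"
  assumes f: "f integrable_on {-a..a}" and "0 \<le> a"
  shows "((\<lambda>x. f x + f (- x)) has_integral integral {-a..a} f) {0..a}"
proof -
  have "(f has_integral integral {0..a} f) {0..a}"
    using integrable_subinterval_real[OF f, of 0 a] by auto
  moreover have "((\<lambda>x. f (- x)) has_integral integral {-a..0} f) {0..a}"
    using integrable_subinterval_real[OF f, of "-a" 0] has_integral_reflect_real[of f _ 0 "-a"]
    by auto
  ultimately have "((\<lambda>x. f x + f (- x)) has_integral
      integral {0..a} f + integral {-a..0} f) {0..a}"
    by (rule has_integral_add)
  moreover have "integral {-a..0} f + integral {0..a} f = integral {-a..a} f"
    using Henstock_Kurzweil_Integration.integral_combine[OF _ _ f, of 0] assms(2) by simp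
  ultimately show ?thesis by (simp add: add.commute)
qed

lemma integral_mult_antimono_nonneg:
  fixes \<phi> u :: "real \<Rightarrow> real"
  assumes \<phi>: "\<phi> integrable_on {a..b}" and "a \<le> b"
    and antimono: "\<And>x y. a \<le> x \<Longrightarrow> x \<le> y \<Longrightarrow> y \<le> b \<Longrightarrow> u y \<le> u x"
    and partial: "\<And>c. c \<in> {a..b} \<Longrightarrow> 0 \<le> integral {a..c} \<phi>"
    and total: "integral {a..b} \<phi> = 0"
  shows "0 \<le> integral {a..b} (\<lambda>x. \<phi> x * u x)"
proof -
  obtain c where c: "c \<in> {a..b}" and "((\<lambda>x. - u x * \<phi> x) has_integral
      (- u a * integral {a..c} \<phi> + - u b * integral {c..b} \<phi>)) {a..b}"
    using second_mean_value_theorem_full[where g="\<lambda>x. - u x", OF \<phi> \<open>a \<le> b\<close>] antimono by auto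
  moreover have "integral {c..b} \<phi> = - integral {a..c} \<phi>"
    using Henstock_Kurzweil_Integration.integral_combine[OF _ _ \<phi>, of c] c total by simp
  ultimately have "((\<lambda>x. - (\<phi> x * u x)) has_integral
      - ((u a - u b) * integral {a..c} \<phi>)) {a..b}"
    by (simp add: algebra_simps)
  then have "integral {a..b} (\<lambda>x. \<phi> x * u x) = (u a - u b) * integral {a..c} \<phi>"
    by (simp add: has_integral_neg_iff integral_unique)
  moreover have "u b \<le> u a" using antimono \<open>a \<le> b\<close> by blast
  ultimately show ?thesis using partial[OF c] by simp
qed

lemma integral_mult_even_antimono_nonneg:
  fixes f u :: "real \<Rightarrow> real"
  assumes f: "f integrable_on {-a..a}" and fu: "(\<lambda>x. f x * u x) integrable_on {-a..a}"
    and "0 \<le> a"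
    and even: "\<And>x. u (- x) = u x"
    and antimono: "\<And>x y. 0 \<le> x \<Longrightarrow> x \<le> y \<Longrightarrow> y \<le> a \<Longrightarrow> u y \<le> u x"
    and partial: "\<And>c. c \<in> {0..a} \<Longrightarrow> 0 \<le> integral {-c..c} f"
    and total: "integral {-a..a} f = 0"
  shows "0 \<le> integral {-a..a} (\<lambda>x. f x * u x)"
proof -
  define \<phi> where "\<phi> x = f x + f (- x)" for x
  have \<phi>: "(\<phi> has_integral integral {-c..c} f) {0..c}" if "c \<in> {0..a}" for c
    unfolding \<phi>_def
    by (rule has_integral_fold_symmetric) (use integrable_subinterval_real[OF f] that in auto)
  have "((\<lambda>x. \<phi> x * u x) has_integral integral {-a..a} (\<lambda>x. f x * u x)) {0..a}"
    using has_integral_fold_symmetric[OF fu \<open>0 \<le> a\<close>] by (simp add: \<phi>_def even algebra_simps)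
  then have "integral {-a..a} (\<lambda>x. f x * u x) = integral {0..a} (\<lambda>x. \<phi> x * u x)"
    by (simp add: integral_unique)
  also have "0 \<le> \<dots>"
  proof (rule integral_mult_antimono_nonneg)
    show "\<phi> integrable_on {0..a}" using \<phi>[of a] \<open>0 \<le> a\<close> by auto
    show "0 \<le> integral {0..c} \<phi>" if "c \<in> {0..a}" for c
      using \<phi>[OF that] partial[OF that] by (simp add: integral_unique)
    show "integral {0..a} \<phi> = 0" using \<phi>[of a] total \<open>0 \<le> a\<close> by (simp add: integral_unique)
  qed (use \<open>0 \<le> a\<close> antimono in auto)
  finally show ?thesis .
qed

lemma is_pdf_has_integral: "is_pdf h \<Longrightarrow> (h has_integral 1) {-1/2..1/2}"
  unfolding is_pdf_def absolutely_integrable_on_def by (metis has_integral_integral)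

lemma is_pdf_shift_has_integral:
  assumes "is_pdf h"
  shows "((\<lambda>x. h (x - r)) has_integral 1) {-1/2..1/2}"
  using periodic1_has_integral_shift[of h 1 "-1/2" r] is_pdf_has_integral[OF assms] assms
  by (simp add: is_pdf_def)

lemma more_focused_shift:
  assumes "more_focused hbar h" and "c \<in> {0..1/2}"
  shows "integral {-c..c} (\<lambda>x. h (x - r)) \<le> integral {-c..c} hbar"
proof -
  have "integral {-c..c} (\<lambda>x. h (x - r)) = integral {-r-c..-r+c} h"
    using integral_shift_real_ivl[of "-r-c" "-r" "-r+c" h] by simp
  also have "\<dots> \<le> integral {-c..c} hbar"
    using assms unfolding more_focused_def atLeastAtMost_iff by blast
  finally show ?thesis .
qed

theorem lemma2p13:
  fixes u h hbar :: "real \<Rightarrow> real"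
  assumes "symmetric_decreasing u"
    and "is_pdf h" and "is_pdf hbar"
    and "more_focused hbar h"
  shows "\<forall>r. integral {-1/2..1/2} (\<lambda>x. h (x - r) * u x)
              \<le> integral {-1/2..1/2} (\<lambda>x. hbar x * u x)"
proof
  fix r
  define g where "g = (\<lambda>x. h (x - r))"
  define f where "f = (\<lambda>x. hbar x - g x)"
  have g: "(g has_integral 1) {-1/2..1/2}"
    unfolding g_def using is_pdf_shift_has_integral[OF assms(2)] .
  have hbar: "(hbar has_integral 1) {-1/2..1/2}" using is_pdf_has_integral[OF assms(3)] .
  have gu: "(\<lambda>x. g x * u x) integrable_on {-1/2..1/2}"
    and hbar_u: "(\<lambda>x. hbar x * u x) integrable_on {-1/2..1/2}"
    using g hbar has_integral_integrable integrable_mult_symmetric_decreasing[OF _ assms(1)]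
    by blast+
  \<comment> \<open>\<open>-1/2\<close> parses as \<open>(-1)/2\<close>, which does not match the pattern \<open>-a\<close>\<close>
  have "0 \<le> integral {-(1/2)..1/2} (\<lambda>x. f x * u x)"
  proof (rule integral_mult_even_antimono_nonneg)
    show "f integrable_on {-(1/2)..1/2}" and "integral {-(1/2)..1/2} f = 0"
      using has_integral_diff[OF hbar g] unfolding f_def by (auto simp: integral_unique)
    show "(\<lambda>x. f x * u x) integrable_on {-(1/2)..1/2}"
      using integrable_diff[OF hbar_u gu] by (simp add: f_def algebra_simps)
    show "0 \<le> integral {-c..c} f" if "c \<in> {0..1/2}" for c
    proof -
      have "hbar integrable_on {-c..c}" and "g integrable_on {-c..c}"
        using that by (auto intro!: integrable_subinterval_real[OF has_integral_integrable] g hbar)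
      from integral_diff[OF this] show ?thesis
        using more_focused_shift[OF assms(4) that, of r] unfolding f_def g_def by simp
    qed
  qed (use symmetric_decreasing_even[OF assms(1)] symmetric_decreasing_antimono[OF assms(1)] in auto)
  then show "integral {-1/2..1/2} (\<lambda>x. h (x - r) * u x) \<le> integral {-1/2..1/2} (\<lambda>x. hbar x * u x)"
    using integral_diff[OF hbar_u gu] by (simp add: f_def g_def algebra_simps)
qed

end
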